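(* Let $b,M\in\mathbb{N}$, let $f_i<f_{i+1}$ be consecutive Farey fractions of order $M$, and let $\varepsilon\in(f_i,f_{i+1})$ be irrational. If $\mathcal{L}_M(\varepsilon)$ contains both words of some $b$-amicable pair, then \[ b\le\min\{\lfloor Mf_i\rfloor+1,\ M-\lfloor Mf_i\rfloor\}. \]
   Context: For irrational $\varepsilon\in(0,1)$, let $T_\varepsilon:[0,1)\to[0,1)$, $T_\varepsilon(x)=x+1-\varepsilon$ on $[0,\varepsilon)$ and $x-\varepsilon$ on $[\varepsilon,1)$; the coding $u_{\varepsilon,x_0}\in\{0,1\}^{\mathbb{Z}}$ has $u_n=0$ if $T^n_\varepsilon(x_0)\in[0,\varepsilon)$ and $1$ otherwise. $\mathcal{L}_M(\varepsilon)$ is the set of length-$M$ factors of $u_{\varepsilon,x_0}$ (independent of $x_0$). Farey fractions of order $M$: reduced fractions in $[0,1]$ with denominator $\le M$, ordered $0=f_0<\dots<f_r=1$. 3iet words: for irrational $\varepsilon\in(0,1)$ and $\max\{\varepsilon,1-\varepsilon\}<\ell<1$, let $T_{\varepsilon,\ell}$ on $[0,\ell)$ be $x\mapsto x+1-\varepsilon$ on $I_A=[0,\ell-1+\varepsilon)$, $x\mapsto x+1-2\varepsilon$ on $I_B=[\ell-1+\varepsilon,\varepsilon)$, $x\mapsto x-\varepsilon$ on $I_C=[\varepsilon,\ell)$; the word $u_{\varepsilon,\ell,x_0}\in\{A,B,C\}^{\mathbb{Z}}$ has $u_n=X$ iff $T^n_{\varepsilon,\ell}(x_0)\in I_X$.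 A 3iet factor is a finite factor of some such word. Morphisms $\sigma_{01},\sigma_{10}:\{A,B,C\}^*\to\{0,1\}^*$: $\sigma_{01}(A)=0,\sigma_{01}(B)=01,\sigma_{01}(C)=1$ and $\sigma_{10}(A)=0,\sigma_{10}(B)=10,\sigma_{10}(C)=1$. Two words $w^{(1)},w^{(2)}\in\{0,1\}^*$ form a $b$-amicable pair if there is a 3iet factor $w$ with exactly $b$ letters $B$ such that $w^{(1)}=\sigma_{01}(w)$ and $w^{(2)}=\sigma_{10}(w)$; its length is the common length $|w|+b$ of $w^{(1)},w^{(2)}$. *)

theory Defs
  imports Complex_Main
begin

definition rot :: "real \<Rightarrow> real \<Rightarrow> real" where
  "rot eps x = (if x < eps then x + 1 - eps else x - eps)"

text \<open>A two-sided orbit of a map T on the interval [0,L) through x0 (T is a bijection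
  of [0,L) in our uses, so this orbit is unique).\<close>
definition is_orbit :: "(real \<Rightarrow> real) \<Rightarrow> real \<Rightarrow> real \<Rightarrow> (int \<Rightarrow> real) \<Rightarrow> bool" where
  "is_orbit T L x0 y \<longleftrightarrow> y 0 = x0 \<and> (\<forall>n. 0 \<le> y n \<and> y n < L \<and> y (n + 1) = T (y n))"

definition rot_code :: "real \<Rightarrow> real \<Rightarrow> nat" where
  "rot_code eps x = (if 0 \<le> x \<and> x < eps then 0 else 1)"

definition is_factor :: "'a list \<Rightarrow> (int \<Rightarrow> 'a) \<Rightarrow> bool" where
  "is_factor w u \<longleftrightarrow> (\<exists>k::int. w = map (\<lambda>j. u (k + int j)) [0..<length w])"

definition rot_word :: "real \<Rightarrow> real \<Rightarrow> int \<Rightarrow> nat" where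
  "rot_word eps x0 = (\<lambda>n. rot_code eps ((THE y. is_orbit (rot eps) 1 x0 y) n))"

text \<open>L_M(eps): length-M factors of u_{eps,x0}; independent of x0, we take the union over x0.\<close>
definition Lang :: "nat \<Rightarrow> real \<Rightarrow> nat list set" where
  "Lang M eps = {w. length w = M \<and> (\<exists>x0. 0 \<le> x0 \<and> x0 < 1 \<and> is_factor w (rot_word eps x0))}"

definition farey :: "nat \<Rightarrow> real set" where
  "farey M = {r. \<exists>p q::nat. 1 \<le> q \<and> q \<le> M \<and> p \<le> q \<and> r = real p / real q}"

definition consecutive_farey :: "nat \<Rightarrow> real \<Rightarrow> real \<Rightarrow> bool" where
  "consecutive_farey M f1 f2 \<longleftrightarrow> f1 \<in> farey M \<and> f2 \<in> farey M \<and> f1 < f2 \<and>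
     \<not> (\<exists>r\<in>farey M. f1 < r \<and> r < f2)"

datatype letter = A | B | C

definition iet3 :: "real \<Rightarrow> real \<Rightarrow> real \<Rightarrow> real" where
  "iet3 eps l x = (if x < l - 1 + eps then x + 1 - eps
                   else if x < eps then x + 1 - 2 * eps
                   else x - eps)"

definition iet3_code :: "real \<Rightarrow> real \<Rightarrow> real \<Rightarrow> letter" where
  "iet3_code eps l x = (if 0 \<le> x \<and> x < l - 1 + eps then A
                        else if l - 1 + eps \<le> x \<and> x < eps then B
                        else C)"

definition iet3_word :: "real \<Rightarrow> real \<Rightarrow> real \<Rightarrow> int \<Rightarrow> letter" where
  "iet3_word eps l x0 = (\<lambda>n. iet3_code eps l ((THE y. is_orbit (iet3 eps l) l x0 y) n))"

definition iet3_factor :: "letter list \<Rightarrow> bool" where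
  "iet3_factor w \<longleftrightarrow> (\<exists>eps l x0. eps \<notin> \<rat> \<and> 0 < eps \<and> eps < 1 \<and>
      max eps (1 - eps) < l \<and> l < 1 \<and> 0 \<le> x0 \<and> x0 < l \<and> is_factor w (iet3_word eps l x0))"

fun sig01 :: "letter \<Rightarrow> nat list" where
  "sig01 A = [0]" | "sig01 B = [0, 1]" | "sig01 C = [1]"

fun sig10 :: "letter \<Rightarrow> nat list" where
  "sig10 A = [0]" | "sig10 B = [1, 0]" | "sig10 C = [1]"

definition sigma01 :: "letter list \<Rightarrow> nat list" where
  "sigma01 w = concat (map sig01 w)"

definition sigma10 :: "letter list \<Rightarrow> nat list" where
  "sigma10 w = concat (map sig10 w)"

definition amicable :: "nat \<Rightarrow> nat list \<Rightarrow> nat list \<Rightarrow> bool" where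
  "amicable b w1 w2 \<longleftrightarrow> (\<exists>w. iet3_factor w \<and> count_list w B = b \<and>
      w1 = sigma01 w \<and> w2 = sigma10 w)"

end

theory Submission
  imports Defs
begin

text \<open>
  Let w1 = sigma01 w be the first word of a b-amicable pair lying in
  L_M(eps).  Every letter B of w contributes one 0 and one 1 to w1, so w1 contains at least
  b zeros and at least b ones.  On the other hand the rotation word is balanced: a window of
  length M of the coding of x |-> x - eps (mod 1) contains either floor(M eps) or
  floor(M eps) + 1 zeros, since the orbit point n is frac(x0 - n eps) and the number of
  zeros equals a difference of floors.  Finally floor(M eps) = floor(M f1) because no fraction
  k/M lies strictly between the consecutive Farey fractions f1 < f2.  Combining,
  b \<le> #0 \<le> floor(M f1) + 1 and b \<le> #1 = M - #0 \<le> M - floor(M f1).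
\<close>

text \<open>A two-sided orbit of a map that is injective on the phase space is determined by its
  starting point: forwards by iterating the map, backwards by injectivity.  This makes the
  definite descriptions in the definitions of the coded words meaningful.\<close>
lemma is_orbit_unique:
  assumes inj: "inj_on T {0..<L}" and y: "is_orbit T L x0 y" and y': "is_orbit T L x0 y'"
  shows "y = y'"
proof -
  have "y (int m) = y' (int m) \<and> y (- int m) = y' (- int m)" for m
  proof (induction m)
    case 0
    then show ?case using y y' unfolding is_orbit_def by simp
  next
    case (Suc m)
    have forward: "y (int (Suc m)) = y' (int (Suc m))"
      using Suc y y' unfolding is_orbit_def by (metis of_nat_Suc add.commute)
    have pred: "- int (Suc m) + 1 = - int m" by simp
    have "T (y (- int (Suc m))) = T (y' (- int (Suc m)))"
      using Suc y y' unfolding is_orbit_def by (metis pred)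
    then have backward: "y (- int (Suc m)) = y' (- int (Suc m))"
      using inj y y' unfolding is_orbit_def inj_on_def by simp
    show ?case using forward backward by simp
  qed
  then show ?thesis by (metis ext int_cases)
qed

lemma rot_frac:
  assumes "0 < eps" "eps < 1"
  shows "rot eps (frac z) = frac (z - eps)"
proof (cases "frac z < eps")
  case True
  have "z - eps - (frac z + 1 - eps) = of_int (\<lfloor>z\<rfloor> - 1)" by (simp add: frac_def)
  then have "z - eps - (frac z + 1 - eps) \<in> \<int>" by (metis Ints_of_int)
  then have "frac (z - eps) = frac z + 1 - eps"
    unfolding frac_unique_iff using True assms frac_lt_1[of z] frac_ge_0[of z]
    by (intro conjI) linarith+
  then show ?thesis using True unfolding rot_def by simp
next
  case False
  have "z - eps - (frac z - eps) = of_int \<lfloor>z\<rfloor>" by (simp add: frac_def)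
  then have "z - eps - (frac z - eps) \<in> \<int>" by (metis Ints_of_int)
  then have "frac (z - eps) = frac z - eps"
    unfolding frac_unique_iff using False assms frac_lt_1[of z] by (intro conjI) linarith+
  then show ?thesis using False unfolding rot_def by simp
qed

lemma rot_inj_on:
  assumes "0 < eps" "eps < 1"
  shows "inj_on (rot eps) {0..<1}"
  using assms unfolding inj_on_def rot_def by (auto split: if_splits)

text \<open>The orbit of x0 under T_eps is n |-> frac(x0 - n eps), hence the n-th letter of the
  rotation word is 0 exactly when frac(x0 - n eps) < eps.\<close>
lemma rot_word_eq:
  assumes eps: "0 < eps" "eps < 1" and x0: "0 \<le> x0" "x0 < 1"
  shows "rot_word eps x0 n = (if frac (x0 - of_int n * eps) < eps then 0 else 1)"
proof -
  define y where "y = (\<lambda>n::int. frac (x0 - of_int n * eps))"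
  have step: "y (n + 1) = rot eps (y n)" for n
  proof -
    have "x0 - of_int (n + 1) * eps = (x0 - of_int n * eps) - eps" by (simp add: algebra_simps)
    then show ?thesis unfolding y_def by (simp only: rot_frac[OF eps])
  qed
  have orbit: "is_orbit (rot eps) 1 x0 y"
    unfolding is_orbit_def using step x0 by (simp add: y_def frac_eq frac_lt_1)
  have "(THE y. is_orbit (rot eps) 1 x0 y) = y"
    using orbit is_orbit_unique[OF rot_inj_on[OF eps]] by blast
  then show ?thesis unfolding rot_word_def rot_code_def y_def by simp
qed

lemma indicator_frac_less:
  assumes "0 < a" "a < 1"
  shows "(if frac z < a then 1 else 0) = \<lfloor>z\<rfloor> - \<lfloor>z - a\<rfloor>"
proof -
  have z: "z = of_int \<lfloor>z\<rfloor> + frac z" by (simp add: frac_def)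
  show ?thesis
  proof (cases "frac z < a")
    case True
    have "\<lfloor>z - a\<rfloor> = \<lfloor>z\<rfloor> - 1"
      using True assms frac_ge_0[of z] z by (intro floor_unique; simp only: of_int_diff of_int_1; linarith)
    then show ?thesis using True by simp
  next
    case False
    have "\<lfloor>z - a\<rfloor> = \<lfloor>z\<rfloor>"
      using False assms frac_lt_1[of z] z by (intro floor_unique; linarith)
    then show ?thesis using False by simp
  qed
qed

text \<open>Summing the indicators telescopes: the number of zeros in the window of length n
  starting at position k is a difference of two floors.\<close>
lemma count_zeros_window:
  assumes "0 < eps" "eps < 1" "0 \<le> x0" "x0 < 1"
  shows "int (count_list (map (\<lambda>j. rot_word eps x0 (k + int j)) [0..<n]) 0)
     = \<lfloor>x0 - of_int k * eps\<rfloor> - \<lfloor>x0 - (of_int k + of_nat n) * eps\<rfloor>"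
proof (induction n)
  case 0
  then show ?case by simp
next
  case (Suc n)
  define z where "z = x0 - (of_int k + of_nat n) * eps"
  have shift: "x0 - (of_int k + of_nat (Suc n)) * eps = z - eps"
    by (simp add: z_def algebra_simps)
  have last_letter: "int (if rot_word eps x0 (k + int n) = 0 then 1 else 0) = \<lfloor>z\<rfloor> - \<lfloor>z - eps\<rfloor>"
    using indicator_frac_less[OF assms(1,2), of z] rot_word_eq[OF assms, of "k + int n"]
    unfolding z_def by (auto simp: algebra_simps split: if_splits)
  have "int (count_list (map (\<lambda>j. rot_word eps x0 (k + int j)) [0..<Suc n]) 0)
     = int (count_list (map (\<lambda>j. rot_word eps x0 (k + int j)) [0..<n]) 0)
       + int (if rot_word eps x0 (k + int n) = 0 then 1 else 0)" by simp
  then show ?case using Suc.IH last_letter unfolding shift z_def by linarith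
qed

lemma floor_diff_bounds:
  "\<lfloor>a\<rfloor> \<le> \<lfloor>z\<rfloor> - \<lfloor>z - a\<rfloor> \<and> \<lfloor>z\<rfloor> - \<lfloor>z - a\<rfloor> \<le> \<lfloor>a\<rfloor> + 1"
proof -
  have "of_int (\<lfloor>z - a\<rfloor> + \<lfloor>a\<rfloor>) \<le> z"
    using of_int_floor_le[of "z - a"] of_int_floor_le[of a] by (simp only: of_int_add)
  then have "\<lfloor>z - a\<rfloor> + \<lfloor>a\<rfloor> \<le> \<lfloor>z\<rfloor>" by (simp only: le_floor_iff)
  moreover have "z < of_int (\<lfloor>z - a\<rfloor> + \<lfloor>a\<rfloor> + 2)"
    using floor_correct[of "z - a"] floor_correct[of a] by simp
  then have "\<lfloor>z\<rfloor> < \<lfloor>z - a\<rfloor> + \<lfloor>a\<rfloor> + 2" by (simp only: floor_less_iff)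
  ultimately show ?thesis by linarith
qed

lemma Lang_count_zeros:
  assumes "0 < eps" "eps < 1" "w \<in> Lang M eps"
  shows "\<lfloor>real M * eps\<rfloor> \<le> int (count_list w 0) \<and> int (count_list w 0) \<le> \<lfloor>real M * eps\<rfloor> + 1"
proof -
  obtain x0 k where x0: "0 \<le> x0" "x0 < 1"
    and w: "w = map (\<lambda>j. rot_word eps x0 (k + int j)) [0..<M]"
    using assms(3) unfolding Lang_def is_factor_def by auto
  have "int (count_list w 0) = \<lfloor>x0 - of_int k * eps\<rfloor> - \<lfloor>(x0 - of_int k * eps) - real M * eps\<rfloor>"
    using count_zeros_window[OF assms(1,2) x0, of k M] w by (simp add: algebra_simps)
  then show ?thesis using floor_diff_bounds[of "real M * eps" "x0 - of_int k * eps"] by simp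
qed

lemma count_sigma01:
  "count_list (sigma01 w) 0 = count_list w A + count_list w B \<and>
   count_list (sigma01 w) 1 = count_list w C + count_list w B"
proof (induction w)
  case Nil
  then show ?case by (simp add: sigma01_def)
next
  case (Cons x w)
  then show ?case by (cases x) (simp_all add: sigma01_def)
qed

lemma count_list_two_le_length:
  "a \<noteq> c \<Longrightarrow> count_list xs a + count_list xs c \<le> length xs"
  by (induction xs) auto

lemma farey_bounds: "r \<in> farey M \<Longrightarrow> 0 \<le> r \<and> r \<le> 1 \<and> 1 \<le> M"
  unfolding farey_def by auto

text \<open>No fraction k/M lies strictly between consecutive Farey fractions of order M, so
  floor(M x) is constant on the open gap (f1, f2).\<close>
lemma floor_const_in_farey_gap:
  assumes farey: "consecutive_farey M f1 f2" and eps: "f1 < eps" "eps < f2"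
  shows "\<lfloor>real M * eps\<rfloor> = \<lfloor>real M * f1\<rfloor>"
proof -
  have f1: "0 \<le> f1" and f2: "f2 \<le> 1" and M: "1 \<le> M"
    using farey farey_bounds unfolding consecutive_farey_def by blast+
  define k where "k = \<lfloor>real M * f1\<rfloor>"
  have k0: "0 \<le> k" unfolding k_def using f1 by simp
  have k: "of_int k \<le> real M * f1" "real M * f1 < of_int k + 1" unfolding k_def by linarith+
  have above: "real M * f1 < real M * eps" using eps(1) M by simp
  have "real M * eps < of_int k + 1"
  proof (rule ccontr)
    assume c: "\<not> real M * eps < of_int k + 1"
    have "real M * eps < real M" using eps(2) f2 M by simp
    then have "nat (k + 1) \<le> M" using c by linarith
    then have "real (nat (k + 1)) / real M \<in> farey M"
      unfolding farey_def using M by auto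
    moreover have "f1 < real (nat (k + 1)) / real M"
      using k k0 M by (simp add: field_simps)
    moreover have "real (nat (k + 1)) / real M \<le> eps"
      using c k0 M by (simp add: field_simps)
    then have "real (nat (k + 1)) / real M < f2" using eps(2) by linarith
    ultimately show False using farey unfolding consecutive_farey_def by blast
  qed
  then show ?thesis using k above unfolding k_def by (subst floor_eq_iff) linarith
qed

theorem mainTheorem4:
  fixes b M :: nat and f1 f2 eps :: real
  assumes "consecutive_farey M f1 f2"
    and "f1 < eps" and "eps < f2" and "eps \<notin> \<rat>"
    and "\<exists>w1 w2. amicable b w1 w2 \<and> w1 \<in> Lang M eps \<and> w2 \<in> Lang M eps"
  shows "int b \<le> min (\<lfloor>real M * f1\<rfloor> + 1) (int M - \<lfloor>real M * f1\<rfloor>)"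
proof -
  have eps: "0 < eps" "eps < 1"
    using assms(1-3) farey_bounds unfolding consecutive_farey_def by fastforce+
  obtain w1 w where w1: "w1 \<in> Lang M eps" "w1 = sigma01 w" and b: "count_list w B = b"
    using assms(5) unfolding amicable_def by auto
  have len: "length w1 = M" using w1(1) unfolding Lang_def by auto
  have b_le: "b \<le> count_list w1 0" "b \<le> count_list w1 1"
    using count_sigma01[of w] w1(2) b by auto
  have "count_list w1 0 + count_list w1 1 \<le> M"
    using count_list_two_le_length[of 0 1 w1] len by simp
  then show ?thesis
    using b_le Lang_count_zeros[OF eps w1(1)] floor_const_in_farey_gap[OF assms(1-3)] by linarith
qed

end
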